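(* Let $\mathcal{A}=(A,B,C,S_B,S_C,\Delta_B,\Delta_C)$ be a multiplier Hopf $*$-algebroid with left counit $\varepsilon_B$, right counit $\varepsilon_C$ and antipode $S$. Then $\varepsilon_C\circ *=*\circ S_B\circ\varepsilon_B$, $\varepsilon_B\circ *=*\circ S_C\circ\varepsilon_C$, and $S\circ *\circ S\circ *=\iota_A$.
   Context: All algebras are associative complex algebras, not necessarily unital; $M(A)$ is the two-sided multiplier algebra of a non-degenerate idempotent algebra $A$; if $A$ is a $*$-algebra, $M(A)$ is a $*$-algebra with $T^*a=(a^*T)^*$, $aT^*=(Ta^* )^*$. Multiplier bialgebroid: a tuple $(A,B,C,S_B,S_C,\Delta_B,\Delta_C)$ with $A$ non-degenerate and idempotent, subalgebras $B,C\subseteq M(A)$, anti-isomorphisms $S_B\colon B\to C$, $S_C\colon C\to B$. Quotients of $A\otimes A$: ${}_BA\otimes A^B$ by the span of $xa\otimes b-a\otimes S_B(x)b$; ${}^CA\otimes A_C$ by $aS_C(y)\otimes b-a\otimes by$; $A_B\otimes{}_BA$ by $ax\otimes b-a\otimes xb$; $A_C\otimes{}_CA$ by $ay\otimes b-a\otimes yb$; ${}_CA\otimes A_C$ by $ya\otimes b-a\otimes by$; ${}_BA\otimes A_B$ by $xa\otimes b-a\otimes bx$ ($x\in B,y\in C$). Requirements: $BA=A=S_B(B)A$, $AC=A=AS_C(C)$; ${}_BA\otimes A^B$ non-degenerate as a right module over $A\otimes1$ and $1\otimes A$, ${}^CA\otimes A_C$ non-degenerate as a left module over $A\otimes1$ and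 $1\otimes A$; $\Delta_B$ a homomorphism into the algebra of endomorphisms $T$ of ${}_BA\otimes A^B$ for which $T(a\otimes1),T(1\otimes b)$ exist in ${}_BA\otimes A^B$ with $T(a\otimes b)=T(a\otimes1)(1\otimes b)=T(1\otimes b)(a\otimes1)$; $\Delta_C$ a homomorphism into the algebra of right-acting maps $w\mapsto wT$ on ${}^CA\otimes A_C$ for which $(a\otimes1)T,(1\otimes b)T$ exist with $(a\otimes b)T=(1\otimes b)((a\otimes1)T)=(a\otimes1)((1\otimes b)T)$; $\Delta_B(xyax'y')=(y\otimes x)\Delta_B(a)(y'\otimes x')$, $\Delta_C(xyax'y')=(y\otimes x)\Delta_C(a)(y'\otimes x')$; coassociativities $(\Delta_B\otimes\iota)(\Delta_B(b)(1\otimes c))(a\otimes1\otimes1)=(\iota\otimes\Delta_B)(\Delta_B(b)(a\otimes1))(1\otimes1\otimes c)$, $(a\otimes1\otimes1)((\Delta_C\otimes\iota)((1\otimes c)\Delta_C(b)))=(1\otimes1\otimes c)((\iota\otimes\Delta_C)((a\otimes1)\Delta_C(b)))$, and mixed $((\Delta_B\otimes\iota)((1\otimes c)\Delta_C(b)))(a\otimes1\otimes1)=(1\otimes1\otimes c)((\iota\otimes\Delta_C)(\Delta_B(b)(a\otimes1)))$, $(a\otimes1\otimes1)((\Delta_C\otimes\iota)(\Delta_B(b)(1\otimes c)))=((\iota\otimes\Delta_B)((a\otimes1)\Delta_C(b)))(1\otimes1\otimes c)$. Canonical maps: $T_\lambda(a\otimes b)=\Delta_B(b)(a\otimes1)$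 on ${}_CA\otimes A_C$; $T_\rho(a\otimes b)=\Delta_B(a)(1\otimes b)$ on $A_B\otimes{}_BA$; ${}_\lambda T(a\otimes b)=(a\otimes1)\Delta_C(b)$ on $A_C\otimes{}_CA$; ${}_\rho T(a\otimes b)=(1\otimes b)\Delta_C(a)$ on ${}_BA\otimes A_B$. Left counit $\varepsilon_B\colon A\to B$: $\varepsilon_B(xS_B(x')a)=x\varepsilon_B(a)x'$, $\sum S_B(\varepsilon_B(c_i))d_i=ab$ if $T_\rho(a\otimes b)=\sum c_i\otimes d_i$, $\sum\varepsilon_B(d_i)c_i=ba$ if $T_\lambda(a\otimes b)=\sum c_i\otimes d_i$. Right counit $\varepsilon_C\colon A\to C$: $\varepsilon_C(aS_C(y')y)=y'\varepsilon_C(a)y$, $\sum d_i\varepsilon_C(c_i)=ba$ if ${}_\rho T(a\otimes b)=\sum c_i\otimes d_i$, $\sum c_iS_C(\varepsilon_C(d_i))=ab$ if ${}_\lambda T(a\otimes b)=\sum c_i\otimes d_i$. Regular multiplier Hopf algebroid: all four canonical maps bijective and $S_B(I_B)A=I^BA=A=AS_C(I_C)=A\,{}^CI$, with $I_B,I^B\subseteq B$ spanned by values of $\omega\colon A\to B$ satisfying $\omega(xa)=x\omega(a)$, resp. $\omega(S_B(x)a)=\omega(a)x$, and $I_C,{}^CI\subseteq C$ by values of $\omega\colon A\to C$ with $\omega(ay)=\omega(a)y$, resp. $\omega(aS_C(y))=y\omega(a)$. Its antipode is the unique anti-automorphism $S$ of $A$ with $S(xyax'y')=S_C(y')S_B(x')S(a)S_C(y)S_B(x)$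 and $m(S\otimes\iota)T_\rho(a\otimes b)=S_C(\varepsilon_C(a))b$, $m(\iota\otimes S)\,{}_\lambda T(a\otimes b)=aS_B(\varepsilon_B(b))$; its counits are unique. Multiplier Hopf $*$-algebroid: a regular multiplier Hopf algebroid where $A$ is a $*$-algebra, $B$ and $C$ are $*$-subalgebras of $M(A)$, $S_B\circ*\circ S_C\circ*=\iota_C$ and $S_C\circ*\circ S_B\circ*=\iota_B$, and $\Delta_B(a^* )=\Delta_C(a)^*$ for all $a$, which is equivalent to $( *\otimes* )\circ T_\lambda={}_\lambda T\circ( *\otimes* )$ and $( *\otimes* )\circ T_\rho={}_\rho T\circ( *\otimes* )$, where $*\otimes*$ denotes the conjugate-linear maps $a\otimes b\mapsto a^*\otimes b^*$ between the corresponding balanced tensor products (e.g. ${}_BA\otimes A^B\to{}^CA\otimes A_C$). *)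

theory Defs
  imports Complex_Main
begin

section \<open>Complex algebras (associative, not necessarily unital)\<close>

class calg = ring +
  fixes csc :: "complex \<Rightarrow> 'a \<Rightarrow> 'a"
  assumes csc_add_r: "csc c (a + b) = csc c a + csc c b"
    and csc_add_l: "csc (c + d) a = csc c a + csc d a"
    and csc_assoc: "csc c (csc d a) = csc (c * d) a"
    and csc_one: "csc 1 a = a"
    and csc_mult_l: "csc c a * b = csc c (a * b)"
    and csc_mult_r: "a * csc c b = csc c (a * b)"

text \<open>The algebra A is the whole carrier type 'a. Linear span inside A:\<close>

inductive_set aspan :: "'a::calg set \<Rightarrow> 'a set" for G where
  aspan_zero: "0 \<in> aspan G"
| aspan_gen: "g \<in> G \<Longrightarrow> g \<in> aspan G"
| aspan_add: "f \<in> aspan G \<Longrightarrow> g \<in> aspan G \<Longrightarrow> f + g \<in> aspan G"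
| aspan_scale: "f \<in> aspan G \<Longrightarrow> csc c f \<in> aspan G"

definition nondeg_idem :: "'a::calg itself \<Rightarrow> bool" where
  "nondeg_idem _ \<longleftrightarrow>
     (\<forall>a::'a. (\<forall>b. a * b = 0) \<longrightarrow> a = 0) \<and>
     (\<forall>a::'a. (\<forall>b. b * a = 0) \<longrightarrow> a = 0) \<and>
     (\<forall>a::'a. a \<in> aspan {b * c | b c. True})"

definition star_alg :: "('a::calg \<Rightarrow> 'a) \<Rightarrow> bool" where
  "star_alg st \<longleftrightarrow>
     (\<forall>a b. st (a + b) = st a + st b) \<and>
     (\<forall>c a. st (csc c a) = csc (cnj c) (st a)) \<and>
     (\<forall>a b. st (a * b) = st b * st a) \<and>
     (\<forall>a. st (st a) = a)"

section \<open>Two-sided multipliers\<close>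

text \<open>A multiplier T is a pair (left action a \<mapsto> T a, right action a \<mapsto> a T).\<close>

type_synonym 'a mlt = "('a \<Rightarrow> 'a) \<times> ('a \<Rightarrow> 'a)"

definition lact :: "'a mlt \<Rightarrow> 'a \<Rightarrow> 'a" where "lact T a = fst T a"
definition ract :: "'a \<Rightarrow> 'a mlt \<Rightarrow> 'a" where "ract a T = snd T a"

definition is_multiplier :: "'a::calg mlt \<Rightarrow> bool" where
  "is_multiplier T \<longleftrightarrow>
     (\<forall>a b. lact T (a * b) = lact T a * b) \<and>
     (\<forall>a b. ract (a * b) T = a * ract b T) \<and>
     (\<forall>a b. ract a T * b = a * lact T b)"

definition mmul :: "'a mlt \<Rightarrow> 'a mlt \<Rightarrow> 'a mlt" where
  "mmul S T = (\<lambda>a. lact S (lact T a), \<lambda>a. ract (ract a S) T)"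
definition madd :: "'a::calg mlt \<Rightarrow> 'a mlt \<Rightarrow> 'a mlt" where
  "madd S T = (\<lambda>a. lact S a + lact T a, \<lambda>a. ract a S + ract a T)"
definition mscale :: "complex \<Rightarrow> 'a::calg mlt \<Rightarrow> 'a mlt" where
  "mscale c T = (\<lambda>a. csc c (lact T a), \<lambda>a. csc c (ract a T))"
definition mzero :: "'a::calg mlt" where
  "mzero = (\<lambda>a. 0, \<lambda>a. 0)"
definition mstar :: "('a \<Rightarrow> 'a) \<Rightarrow> 'a mlt \<Rightarrow> 'a mlt" where
  "mstar st T = (\<lambda>a. st (ract (st a) T), \<lambda>a. st (lact T (st a)))"

inductive_set mspan :: "'a::calg mlt set \<Rightarrow> 'a mlt set" for G where
  mspan_zero: "mzero \<in> mspan G"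
| mspan_gen: "g \<in> G \<Longrightarrow> g \<in> mspan G"
| mspan_add: "f \<in> mspan G \<Longrightarrow> g \<in> mspan G \<Longrightarrow> madd f g \<in> mspan G"
| mspan_scale: "f \<in> mspan G \<Longrightarrow> mscale c f \<in> mspan G"

definition subalg :: "'a::calg mlt set \<Rightarrow> bool" where
  "subalg B \<longleftrightarrow> (\<forall>x\<in>B. is_multiplier x) \<and> mzero \<in> B \<and>
     (\<forall>x\<in>B. \<forall>x'\<in>B. madd x x' \<in> B \<and> mmul x x' \<in> B) \<and>
     (\<forall>c. \<forall>x\<in>B. mscale c x \<in> B)"

definition anti_iso :: "'a::calg mlt set \<Rightarrow> 'a mlt set \<Rightarrow> ('a mlt \<Rightarrow> 'a mlt) \<Rightarrow> bool" where
  "anti_iso B C f \<longleftrightarrow> bij_betw f B C \<and>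
     (\<forall>x\<in>B. \<forall>x'\<in>B. f (madd x x') = madd (f x) (f x') \<and> f (mmul x x') = mmul (f x') (f x)) \<and>
     (\<forall>c. \<forall>x\<in>B. f (mscale c x) = mscale c (f x))"

section \<open>Balanced tensor products, as quotients of the free vector space on pairs\<close>

text \<open>A formal sum \<Sum> a_i \<otimes> b_i is a list of pairs; fv sends it to the free vector space.\<close>

definition fv :: "'b list \<Rightarrow> 'b \<Rightarrow> complex" where
  "fv w = (\<lambda>p. of_nat (count_list w p))"

definition delta :: "'b \<Rightarrow> 'b \<Rightarrow> complex" where
  "delta p = (\<lambda>q. if q = p then 1 else 0)"

inductive_set cspan :: "('b \<Rightarrow> complex) set \<Rightarrow> ('b \<Rightarrow> complex) set" for G where
  cspan_zero: "(\<lambda>_. 0) \<in> cspan G"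
| cspan_gen: "g \<in> G \<Longrightarrow> g \<in> cspan G"
| cspan_add: "f \<in> cspan G \<Longrightarrow> g \<in> cspan G \<Longrightarrow> (\<lambda>p. f p + g p) \<in> cspan G"
| cspan_scale: "f \<in> cspan G \<Longrightarrow> (\<lambda>p. c * f p) \<in> cspan G"

definition bil2 :: "('a::calg \<times> 'a \<Rightarrow> complex) set" where
  "bil2 =
    {(\<lambda>p. delta (a + a', b) p - delta (a, b) p - delta (a', b) p) | a a' b. True} \<union>
    {(\<lambda>p. delta (a, b + b') p - delta (a, b) p - delta (a, b') p) | a b b'. True} \<union>
    {(\<lambda>p. delta (csc c a, b) p - c * delta (a, b) p) | c a b. True} \<union>
    {(\<lambda>p. delta (a, csc c b) p - c * delta (a, b) p) | c a b. True}"

definition brel2 :: "(('a \<Rightarrow> 'a) \<times> ('a \<Rightarrow> 'a)) set \<Rightarrow> ('a \<times> 'a \<Rightarrow> complex) set" where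
  "brel2 F = {(\<lambda>p. delta (f a, b) p - delta (a, g b) p) | f g a b. (f, g) \<in> F}"

definition teq2 :: "(('a::calg \<Rightarrow> 'a) \<times> ('a \<Rightarrow> 'a)) set \<Rightarrow> ('a \<times> 'a) list \<Rightarrow> ('a \<times> 'a) list \<Rightarrow> bool" where
  "teq2 F w v \<longleftrightarrow> (\<lambda>p. fv w p - fv v p) \<in> cspan (bil2 \<union> brel2 F)"

definition fBB :: "'a mlt set \<Rightarrow> ('a mlt \<Rightarrow> 'a mlt) \<Rightarrow> (('a \<Rightarrow> 'a) \<times> ('a \<Rightarrow> 'a)) set" where
  \<comment> \<open>_B A \<otimes> A^B : x a \<otimes> b = a \<otimes> S_B(x) b\<close>
  "fBB B SB = {(lact x, lact (SB x)) | x. x \<in> B}"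
definition fCC :: "'a mlt set \<Rightarrow> ('a mlt \<Rightarrow> 'a mlt) \<Rightarrow> (('a \<Rightarrow> 'a) \<times> ('a \<Rightarrow> 'a)) set" where
  \<comment> \<open>^C A \<otimes> A_C : a S_C(y) \<otimes> b = a \<otimes> b y\<close>
  "fCC C SC = {(\<lambda>a. ract a (SC y), \<lambda>b. ract b y) | y. y \<in> C}"
definition fAB :: "'a mlt set \<Rightarrow> (('a \<Rightarrow> 'a) \<times> ('a \<Rightarrow> 'a)) set" where
  \<comment> \<open>A_B \<otimes> _B A : a x \<otimes> b = a \<otimes> x b\<close>
  "fAB B = {(\<lambda>a. ract a x, lact x) | x. x \<in> B}"
definition fAC :: "'a mlt set \<Rightarrow> (('a \<Rightarrow> 'a) \<times> ('a \<Rightarrow> 'a)) set" where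
  \<comment> \<open>A_C \<otimes> _C A : a y \<otimes> b = a \<otimes> y b\<close>
  "fAC C = {(\<lambda>a. ract a y, lact y) | y. y \<in> C}"
definition fCA :: "'a mlt set \<Rightarrow> (('a \<Rightarrow> 'a) \<times> ('a \<Rightarrow> 'a)) set" where
  \<comment> \<open>_C A \<otimes> A_C : y a \<otimes> b = a \<otimes> b y\<close>
  "fCA C = {(lact y, \<lambda>b. ract b y) | y. y \<in> C}"
definition fBA :: "'a mlt set \<Rightarrow> (('a \<Rightarrow> 'a) \<times> ('a \<Rightarrow> 'a)) set" where
  \<comment> \<open>_B A \<otimes> A_B : x a \<otimes> b = a \<otimes> b x\<close>
  "fBA B = {(lact x, \<lambda>b. ract b x) | x. x \<in> B}"

text \<open>Triple tensor products: trilinearity plus balancing F12 between legs 1,2 and F23 between legs 2,3.\<close>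

definition bil3 :: "('a::calg \<times> 'a \<times> 'a \<Rightarrow> complex) set" where
  "bil3 =
    {(\<lambda>p. delta (a + a', b, e) p - delta (a, b, e) p - delta (a', b, e) p) | a a' b e. True} \<union>
    {(\<lambda>p. delta (a, b + b', e) p - delta (a, b, e) p - delta (a, b', e) p) | a b b' e. True} \<union>
    {(\<lambda>p. delta (a, b, e + e') p - delta (a, b, e) p - delta (a, b, e') p) | a b e e'. True} \<union>
    {(\<lambda>p. delta (csc c a, b, e) p - c * delta (a, b, e) p) | c a b e. True} \<union>
    {(\<lambda>p. delta (a, csc c b, e) p - c * delta (a, b, e) p) | c a b e. True} \<union>
    {(\<lambda>p. delta (a, b, csc c e) p - c * delta (a, b, e) p) | c a b e. True}"

definition brel3 :: "(('a \<Rightarrow> 'a) \<times> ('a \<Rightarrow> 'a)) set \<Rightarrow> (('a \<Rightarrow> 'a) \<times> ('a \<Rightarrow> 'a)) set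
    \<Rightarrow> ('a \<times> 'a \<times> 'a \<Rightarrow> complex) set" where
  "brel3 F12 F23 =
    {(\<lambda>p. delta (f a, b, e) p - delta (a, g b, e) p) | f g a b e. (f, g) \<in> F12} \<union>
    {(\<lambda>p. delta (a, f b, e) p - delta (a, b, g e) p) | f g a b e. (f, g) \<in> F23}"

definition teq3 :: "(('a::calg \<Rightarrow> 'a) \<times> ('a \<Rightarrow> 'a)) set \<Rightarrow> (('a \<Rightarrow> 'a) \<times> ('a \<Rightarrow> 'a)) set
    \<Rightarrow> ('a \<times> 'a \<times> 'a) list \<Rightarrow> ('a \<times> 'a \<times> 'a) list \<Rightarrow> bool" where
  "teq3 F12 F23 w v \<longleftrightarrow> (\<lambda>p. fv w p - fv v p) \<in> cspan (bil3 \<union> brel3 F12 F23)"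

definition rt1 :: "('a::calg \<times> 'a) list \<Rightarrow> 'a \<Rightarrow> ('a \<times> 'a) list" where
  "rt1 w a = map (\<lambda>(p, q). (p * a, q)) w"
definition rt2 :: "('a::calg \<times> 'a) list \<Rightarrow> 'a \<Rightarrow> ('a \<times> 'a) list" where
  "rt2 w b = map (\<lambda>(p, q). (p, q * b)) w"
definition lt1 :: "'a::calg \<Rightarrow> ('a \<times> 'a) list \<Rightarrow> ('a \<times> 'a) list" where
  "lt1 a w = map (\<lambda>(p, q). (a * p, q)) w"
definition lt2 :: "'a::calg \<Rightarrow> ('a \<times> 'a) list \<Rightarrow> ('a \<times> 'a) list" where
  "lt2 b w = map (\<lambda>(p, q). (p, b * q)) w"
definition mlt2 :: "'a mlt \<Rightarrow> 'a mlt \<Rightarrow> ('a \<times> 'a) list \<Rightarrow> ('a \<times> 'a) list" where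
  "mlt2 y x w = map (\<lambda>(p, q). (lact y p, lact x q)) w"
definition mrt2 :: "('a \<times> 'a) list \<Rightarrow> 'a mlt \<Rightarrow> 'a mlt \<Rightarrow> ('a \<times> 'a) list" where
  "mrt2 w y x = map (\<lambda>(p, q). (ract p y, ract q x)) w"
definition tsc :: "complex \<Rightarrow> ('a::calg \<times> 'a) list \<Rightarrow> ('a \<times> 'a) list" where
  "tsc c w = map (\<lambda>(p, q). (csc c p, q)) w"
definition star2 :: "('a \<Rightarrow> 'a) \<Rightarrow> ('a \<times> 'a) list \<Rightarrow> ('a \<times> 'a) list" where
  "star2 st w = map (\<lambda>(p, q). (st p, st q)) w"

definition leg1 :: "('a \<Rightarrow> ('a \<times> 'a) list) \<Rightarrow> ('a \<times> 'a) list \<Rightarrow> ('a \<times> 'a \<times> 'a) list" where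
  "leg1 f w = concat (map (\<lambda>(p, q). map (\<lambda>(r, s). (r, s, q)) (f p)) w)"
definition leg2 :: "('a \<Rightarrow> ('a \<times> 'a) list) \<Rightarrow> ('a \<times> 'a) list \<Rightarrow> ('a \<times> 'a \<times> 'a) list" where
  "leg2 f w = concat (map (\<lambda>(p, q). map (\<lambda>(r, s). (p, r, s)) (f q)) w)"

section \<open>Multiplier bialgebroids\<close>

text \<open>Db a is the endomorphism Delta_B(a) of _B A \<otimes> A^B acting on representatives;
  Dc a w is w Delta_C(a) (right action on ^C A \<otimes> A_C).\<close>

type_synonym 'a cop = "'a \<Rightarrow> ('a \<times> 'a) list \<Rightarrow> ('a \<times> 'a) list"

text \<open>Delta_B(b)(a \<otimes> 1), Delta_B(b)(1 \<otimes> c), (a \<otimes> 1)Delta_C(b), (1 \<otimes> c)Delta_C(b).\<close>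

definition lB :: "'a::calg mlt set \<Rightarrow> ('a mlt \<Rightarrow> 'a mlt) \<Rightarrow> 'a cop \<Rightarrow> 'a \<Rightarrow> 'a \<Rightarrow> ('a \<times> 'a) list" where
  "lB B SB Db b a = (SOME u. \<forall>d. teq2 (fBB B SB) (Db b [(a, d)]) (rt2 u d))"
definition rB :: "'a::calg mlt set \<Rightarrow> ('a mlt \<Rightarrow> 'a mlt) \<Rightarrow> 'a cop \<Rightarrow> 'a \<Rightarrow> 'a \<Rightarrow> ('a \<times> 'a) list" where
  "rB B SB Db b c = (SOME u. \<forall>a. teq2 (fBB B SB) (Db b [(a, c)]) (rt1 u a))"
definition lC :: "'a::calg mlt set \<Rightarrow> ('a mlt \<Rightarrow> 'a mlt) \<Rightarrow> 'a cop \<Rightarrow> 'a \<Rightarrow> 'a \<Rightarrow> ('a \<times> 'a) list" where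
  "lC C SC Dc b a = (SOME u. \<forall>d. teq2 (fCC C SC) (Dc b [(a, d)]) (lt2 d u))"
definition rC :: "'a::calg mlt set \<Rightarrow> ('a mlt \<Rightarrow> 'a mlt) \<Rightarrow> 'a cop \<Rightarrow> 'a \<Rightarrow> 'a \<Rightarrow> ('a \<times> 'a) list" where
  "rC C SC Dc b c = (SOME u. \<forall>a. teq2 (fCC C SC) (Dc b [(a, c)]) (lt1 a u))"

definition mult_bialgebroid ::
  "'a::calg mlt set \<Rightarrow> 'a mlt set \<Rightarrow> ('a mlt \<Rightarrow> 'a mlt) \<Rightarrow> ('a mlt \<Rightarrow> 'a mlt) \<Rightarrow> 'a cop \<Rightarrow> 'a cop \<Rightarrow> bool" where
  "mult_bialgebroid B C SB SC Db Dc \<longleftrightarrow>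
    (let FB = fBB B SB; FC = fCC C SC in
     nondeg_idem TYPE('a) \<and> subalg B \<and> subalg C \<and> anti_iso B C SB \<and> anti_iso C B SC \<and>
     \<comment> \<open>BA = A = S_B(B)A, AC = A = AS_C(C)\<close>
     (\<forall>a. a \<in> aspan {lact x b | x b. x \<in> B}) \<and>
     (\<forall>a. a \<in> aspan {lact (SB x) b | x b. x \<in> B}) \<and>
     (\<forall>a. a \<in> aspan {ract b y | y b. y \<in> C}) \<and>
     (\<forall>a. a \<in> aspan {ract b (SC y) | y b. y \<in> C}) \<and>
     \<comment> \<open>non-degeneracy of the module structures\<close>
     (\<forall>w. (\<forall>a. teq2 FB (rt1 w a) []) \<longrightarrow> teq2 FB w []) \<and>
     (\<forall>w. (\<forall>b. teq2 FB (rt2 w b) []) \<longrightarrow> teq2 FB w []) \<and>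
     (\<forall>w. (\<forall>a. teq2 FC (lt1 a w) []) \<longrightarrow> teq2 FC w []) \<and>
     (\<forall>w. (\<forall>b. teq2 FC (lt2 b w) []) \<longrightarrow> teq2 FC w []) \<and>
     \<comment> \<open>each Delta_B(c) is a linear endomorphism of _B A \<otimes> A^B of the required kind\<close>
     (\<forall>c w v. teq2 FB w v \<longrightarrow> teq2 FB (Db c w) (Db c v)) \<and>
     (\<forall>c w v. teq2 FB (Db c (w @ v)) (Db c w @ Db c v)) \<and>
     (\<forall>c k w. teq2 FB (Db c (tsc k w)) (tsc k (Db c w))) \<and>
     (\<forall>c a. \<exists>u. \<forall>b. teq2 FB (Db c [(a, b)]) (rt2 u b)) \<and>
     (\<forall>c b. \<exists>u. \<forall>a. teq2 FB (Db c [(a, b)]) (rt1 u a)) \<and>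
     \<comment> \<open>Delta_B is a homomorphism\<close>
     (\<forall>a b w. teq2 FB (Db (a + b) w) (Db a w @ Db b w)) \<and>
     (\<forall>k a w. teq2 FB (Db (csc k a) w) (tsc k (Db a w))) \<and>
     (\<forall>a b w. teq2 FB (Db (a * b) w) (Db a (Db b w))) \<and>
     \<comment> \<open>each Delta_C(c) is a linear right-acting map on ^C A \<otimes> A_C of the required kind\<close>
     (\<forall>c w v. teq2 FC w v \<longrightarrow> teq2 FC (Dc c w) (Dc c v)) \<and>
     (\<forall>c w v. teq2 FC (Dc c (w @ v)) (Dc c w @ Dc c v)) \<and>
     (\<forall>c k w. teq2 FC (Dc c (tsc k w)) (tsc k (Dc c w))) \<and>
     (\<forall>c a. \<exists>u. \<forall>b. teq2 FC (Dc c [(a, b)]) (lt2 b u)) \<and>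
     (\<forall>c b. \<exists>u. \<forall>a. teq2 FC (Dc c [(a, b)]) (lt1 a u)) \<and>
     \<comment> \<open>Delta_C is a homomorphism (w(T_1 T_2) = (w T_1) T_2)\<close>
     (\<forall>a b w. teq2 FC (Dc (a + b) w) (Dc a w @ Dc b w)) \<and>
     (\<forall>k a w. teq2 FC (Dc (csc k a) w) (tsc k (Dc a w))) \<and>
     (\<forall>a b w. teq2 FC (Dc (a * b) w) (Dc b (Dc a w))) \<and>
     \<comment> \<open>bimodule properties\<close>
     (\<forall>x\<in>B. \<forall>x'\<in>B. \<forall>y\<in>C. \<forall>y'\<in>C. \<forall>a w.
        teq2 FB (Db (ract (ract (lact x (lact y a)) x') y') w) (mlt2 y x (Db a (mlt2 y' x' w))) \<and>
        teq2 FC (Dc (ract (ract (lact x (lact y a)) x') y') w) (mrt2 (Dc a (mrt2 w y x)) y' x')) \<and>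
     \<comment> \<open>coassociativities\<close>
     (\<forall>a b c. teq3 FB FB (leg1 (\<lambda>p. lB B SB Db p a) (rB B SB Db b c))
                         (leg2 (\<lambda>q. rB B SB Db q c) (lB B SB Db b a))) \<and>
     (\<forall>a b c. teq3 FC FC (leg1 (\<lambda>p. lC C SC Dc p a) (rC C SC Dc b c))
                         (leg2 (\<lambda>q. rC C SC Dc q c) (lC C SC Dc b a))) \<and>
     (\<forall>a b c. teq3 FB FC (leg1 (\<lambda>p. lB B SB Db p a) (rC C SC Dc b c))
                         (leg2 (\<lambda>q. rC C SC Dc q c) (lB B SB Db b a))) \<and>
     (\<forall>a b c. teq3 FC FB (leg1 (\<lambda>p. lC C SC Dc p a) (rB B SB Db b c))
                         (leg2 (\<lambda>q. rB B SB Db q c) (lC C SC Dc b a))))"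

section \<open>Canonical maps, counits, regularity, antipode\<close>

definition Tlam :: "'a::calg mlt set \<Rightarrow> ('a mlt \<Rightarrow> 'a mlt) \<Rightarrow> 'a cop \<Rightarrow> ('a \<times> 'a) list \<Rightarrow> ('a \<times> 'a) list" where
  "Tlam B SB Db w = concat (map (\<lambda>(a, b). lB B SB Db b a) w)"
definition Trho :: "'a::calg mlt set \<Rightarrow> ('a mlt \<Rightarrow> 'a mlt) \<Rightarrow> 'a cop \<Rightarrow> ('a \<times> 'a) list \<Rightarrow> ('a \<times> 'a) list" where
  "Trho B SB Db w = concat (map (\<lambda>(a, b). rB B SB Db a b) w)"
definition lamT :: "'a::calg mlt set \<Rightarrow> ('a mlt \<Rightarrow> 'a mlt) \<Rightarrow> 'a cop \<Rightarrow> ('a \<times> 'a) list \<Rightarrow> ('a \<times> 'a) list" where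
  "lamT C SC Dc w = concat (map (\<lambda>(a, b). lC C SC Dc b a) w)"
definition rhoT :: "'a::calg mlt set \<Rightarrow> ('a mlt \<Rightarrow> 'a mlt) \<Rightarrow> 'a cop \<Rightarrow> ('a \<times> 'a) list \<Rightarrow> ('a \<times> 'a) list" where
  "rhoT C SC Dc w = concat (map (\<lambda>(a, b). rC C SC Dc a b) w)"

definition qbij :: "(('a::calg \<Rightarrow> 'a) \<times> ('a \<Rightarrow> 'a)) set \<Rightarrow> (('a \<Rightarrow> 'a) \<times> ('a \<Rightarrow> 'a)) set
    \<Rightarrow> (('a \<times> 'a) list \<Rightarrow> ('a \<times> 'a) list) \<Rightarrow> bool" where
  "qbij Fd Fc T \<longleftrightarrow> (\<forall>w v. teq2 Fc (T w) (T v) \<longrightarrow> teq2 Fd w v) \<and> (\<forall>u. \<exists>w. teq2 Fc (T w) u)"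

definition mlinear :: "('a::calg \<Rightarrow> 'a mlt) \<Rightarrow> bool" where
  "mlinear \<omega> \<longleftrightarrow> (\<forall>a b. \<omega> (a + b) = madd (\<omega> a) (\<omega> b)) \<and> (\<forall>c a. \<omega> (csc c a) = mscale c (\<omega> a))"

definition regular_mult_hopf_algebroid ::
  "'a::calg mlt set \<Rightarrow> 'a mlt set \<Rightarrow> ('a mlt \<Rightarrow> 'a mlt) \<Rightarrow> ('a mlt \<Rightarrow> 'a mlt) \<Rightarrow> 'a cop \<Rightarrow> 'a cop \<Rightarrow> bool" where
  "regular_mult_hopf_algebroid B C SB SC Db Dc \<longleftrightarrow>
    mult_bialgebroid B C SB SC Db Dc \<and>
    qbij (fCA C) (fBB B SB) (Tlam B SB Db) \<and>
    qbij (fAB B) (fBB B SB) (Trho B SB Db) \<and>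
    qbij (fAC C) (fCC C SC) (lamT C SC Dc) \<and>
    qbij (fBA B) (fCC C SC) (rhoT C SC Dc) \<and>
    (let I_B = mspan {\<omega> a | \<omega> a. mlinear \<omega> \<and> (\<forall>a. \<omega> a \<in> B) \<and> (\<forall>x\<in>B. \<forall>a. \<omega> (lact x a) = mmul x (\<omega> a))};
         I'B = mspan {\<omega> a | \<omega> a. mlinear \<omega> \<and> (\<forall>a. \<omega> a \<in> B) \<and> (\<forall>x\<in>B. \<forall>a. \<omega> (lact (SB x) a) = mmul (\<omega> a) x)};
         I_C = mspan {\<omega> a | \<omega> a. mlinear \<omega> \<and> (\<forall>a. \<omega> a \<in> C) \<and> (\<forall>y\<in>C. \<forall>a. \<omega> (ract a y) = mmul (\<omega> a) y)};
         I'C = mspan {\<omega> a | \<omega> a. mlinear \<omega> \<and> (\<forall>a. \<omega> a \<in> C) \<and> (\<forall>y\<in>C. \<forall>a. \<omega> (ract a (SC y)) = mmul y (\<omega> a))}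
     in (\<forall>a. a \<in> aspan {lact (SB x) b | x b. x \<in> I_B}) \<and>
        (\<forall>a. a \<in> aspan {lact x b | x b. x \<in> I'B}) \<and>
        (\<forall>a. a \<in> aspan {ract b (SC y) | y b. y \<in> I_C}) \<and>
        (\<forall>a. a \<in> aspan {ract b y | y b. y \<in> I'C}))"

definition left_counit ::
  "'a::calg mlt set \<Rightarrow> ('a mlt \<Rightarrow> 'a mlt) \<Rightarrow> 'a cop \<Rightarrow> ('a \<Rightarrow> 'a mlt) \<Rightarrow> bool" where
  "left_counit B SB Db eB \<longleftrightarrow>
    (\<forall>a. eB a \<in> B) \<and>
    (\<forall>x\<in>B. \<forall>x'\<in>B. \<forall>a. eB (lact x (lact (SB x') a)) = mmul (mmul x (eB a)) x') \<and>
    (\<forall>a b w. teq2 (fBB B SB) w (rB B SB Db a b) \<longrightarrow>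
       sum_list (map (\<lambda>(c, d). lact (SB (eB c)) d) w) = a * b) \<and>
    (\<forall>a b w. teq2 (fBB B SB) w (lB B SB Db b a) \<longrightarrow>
       sum_list (map (\<lambda>(c, d). lact (eB d) c) w) = b * a)"

definition right_counit ::
  "'a::calg mlt set \<Rightarrow> ('a mlt \<Rightarrow> 'a mlt) \<Rightarrow> 'a cop \<Rightarrow> ('a \<Rightarrow> 'a mlt) \<Rightarrow> bool" where
  "right_counit C SC Dc eC \<longleftrightarrow>
    (\<forall>a. eC a \<in> C) \<and>
    (\<forall>y\<in>C. \<forall>y'\<in>C. \<forall>a. eC (ract (ract a (SC y')) y) = mmul (mmul y' (eC a)) y) \<and>
    (\<forall>a b w. teq2 (fCC C SC) w (rC C SC Dc a b) \<longrightarrow>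
       sum_list (map (\<lambda>(c, d). ract d (eC c)) w) = b * a) \<and>
    (\<forall>a b w. teq2 (fCC C SC) w (lC C SC Dc b a) \<longrightarrow>
       sum_list (map (\<lambda>(c, d). ract c (SC (eC d))) w) = a * b)"

definition antipode ::
  "'a::calg mlt set \<Rightarrow> 'a mlt set \<Rightarrow> ('a mlt \<Rightarrow> 'a mlt) \<Rightarrow> ('a mlt \<Rightarrow> 'a mlt) \<Rightarrow> 'a cop \<Rightarrow> 'a cop
     \<Rightarrow> ('a \<Rightarrow> 'a mlt) \<Rightarrow> ('a \<Rightarrow> 'a mlt) \<Rightarrow> ('a \<Rightarrow> 'a) \<Rightarrow> bool" where
  "antipode B C SB SC Db Dc eB eC S \<longleftrightarrow>
    bij S \<and> (\<forall>a b. S (a + b) = S a + S b) \<and> (\<forall>c a. S (csc c a) = csc c (S a)) \<and>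
    (\<forall>a b. S (a * b) = S b * S a) \<and>
    (\<forall>x\<in>B. \<forall>x'\<in>B. \<forall>y\<in>C. \<forall>y'\<in>C. \<forall>a.
       S (ract (ract (lact x (lact y a)) x') y') =
       lact (SC y') (lact (SB x') (ract (ract (S a) (SC y)) (SB x)))) \<and>
    (\<forall>a b w. teq2 (fBB B SB) w (rB B SB Db a b) \<longrightarrow>
       sum_list (map (\<lambda>(c, d). S c * d) w) = lact (SC (eC a)) b) \<and>
    (\<forall>a b w. teq2 (fCC C SC) w (lC C SC Dc b a) \<longrightarrow>
       sum_list (map (\<lambda>(c, d). c * S d) w) = ract a (SB (eB b)))"

section \<open>Multiplier Hopf *-algebroids\<close>

definition mult_hopf_star_algebroid ::
  "('a::calg \<Rightarrow> 'a) \<Rightarrow> 'a mlt set \<Rightarrow> 'a mlt set \<Rightarrow> ('a mlt \<Rightarrow> 'a mlt) \<Rightarrow> ('a mlt \<Rightarrow> 'a mlt)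
     \<Rightarrow> 'a cop \<Rightarrow> 'a cop \<Rightarrow> bool" where
  "mult_hopf_star_algebroid st B C SB SC Db Dc \<longleftrightarrow>
    regular_mult_hopf_algebroid B C SB SC Db Dc \<and>
    star_alg st \<and>
    (\<forall>x\<in>B. mstar st x \<in> B) \<and> (\<forall>y\<in>C. mstar st y \<in> C) \<and>
    (\<forall>y\<in>C. SB (mstar st (SC (mstar st y))) = y) \<and>
    (\<forall>x\<in>B. SC (mstar st (SB (mstar st x))) = x) \<and>
    \<comment> \<open>Delta_B(a^*) = Delta_C(a)^*, where T^*(w) = ((w^*) T)^*\<close>
    (\<forall>a w. teq2 (fBB B SB) (Db (st a) w) (star2 st (Dc a (star2 st w))))"

end

theory Submission
  imports Defs
begin

text \<open>The involution intertwines the two comultiplications: \<open>\<star> \<otimes> \<star>\<close> maps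
  \<open>(1 \<otimes> b\<^sup>*)\<Delta>\<^sub>C(a\<^sup>*)\<close> to \<open>\<Delta>\<^sub>B(a)(1 \<otimes> b)\<close>. Conjugating the defining identity of
  \<open>\<epsilon>\<^sub>C\<close> therefore shows that \<open>c \<otimes> d \<mapsto> \<epsilon>\<^sub>C(c\<^sup>*)\<^sup>* d\<close> sends \<open>\<Delta>\<^sub>B(a)(1 \<otimes> b)\<close> to \<open>ab\<close>,
  exactly like \<open>c \<otimes> d \<mapsto> S\<^sub>B(\<epsilon>\<^sub>B(c)) d\<close>. Since these elements span \<open>\<^sub>BA \<otimes> A\<^sup>B\<close>
  (\<open>T\<^sub>\<rho>\<close> is surjective), \<open>S\<^sub>B(\<epsilon>\<^sub>B(a))\<close> and \<open>\<epsilon>\<^sub>C(a\<^sup>*)\<^sup>*\<close> agree as left, hence as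
  two-sided, multipliers; applying \<open>S\<^sub>C \<circ> \<star>\<close> gives the formula for \<open>\<epsilon>\<^sub>B\<close>. The identity
  for the antipode follows in the same way, comparing two maps on the range of \<open>T\<^sub>\<lambda>\<close> and
  cancelling by non-degeneracy.\<close>

section \<open>Balanced tensor products\<close>

definition tneg :: "('a::calg \<times> 'a) list \<Rightarrow> ('a \<times> 'a) list" where
  "tneg w = map (\<lambda>(c, d). (- c, d)) w"

definition tsum :: "('a \<Rightarrow> 'b \<Rightarrow> 'c::comm_monoid_add) \<Rightarrow> ('a \<times> 'b) list \<Rightarrow> 'c" where
  "tsum \<phi> w = sum_list (map (\<lambda>(c, d). \<phi> c d) w)"

lemma tsum_Nil [simp]: "tsum \<phi> [] = 0"
  by (simp add: tsum_def)

lemma tsum_Cons [simp]: "tsum \<phi> ((c, d) # w) = \<phi> c d + tsum \<phi> w"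
  by (simp add: tsum_def)

lemma tsum_append [simp]: "tsum \<phi> (w @ v) = tsum \<phi> w + tsum \<phi> v"
  by (simp add: tsum_def)

lemma tsum_Trho: "tsum \<phi> (Trho B SB Db w) = tsum (\<lambda>a b. tsum \<phi> (rB B SB Db a b)) w"
  by (induction w) (auto simp: Trho_def tsum_def)

lemma tsum_Tlam: "tsum \<phi> (Tlam B SB Db w) = tsum (\<lambda>a b. tsum \<phi> (lB B SB Db b a)) w"
  by (induction w) (auto simp: Tlam_def tsum_def)

lemma fv_append: "fv (w @ v) p = fv w p + fv v p"
  by (simp add: fv_def)

lemma fv_Cons: "fv (x # w) p = delta x p + fv w p"
  by (simp add: fv_def delta_def)

lemma teq2_refl: "teq2 F w w"
  by (simp add: teq2_def cspan_zero)

lemma teq2_sym: "teq2 F w v \<Longrightarrow> teq2 F v w"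
  unfolding teq2_def by (drule cspan_scale[where c = "-1"]) simp

lemma teq2_trans [trans]: "teq2 F w v \<Longrightarrow> teq2 F v u \<Longrightarrow> teq2 F w u"
  unfolding teq2_def by (drule (1) cspan_add) simp

lemma teq2_append: "teq2 F w v \<Longrightarrow> teq2 F z z' \<Longrightarrow> teq2 F (w @ z) (v @ z')"
  unfolding teq2_def by (drule (1) cspan_add) (simp add: fv_append algebra_simps)

lemma teq2_balanced: "(f, g) \<in> F \<Longrightarrow> teq2 F [(f a, b)] [(a, g b)]"
  unfolding teq2_def by (rule cspan_gen) (auto simp: fv_Cons brel2_def)

lemma fv_tneg_in_cspan: "(\<lambda>p. fv (tneg z) p + fv z p) \<in> cspan (bil2 \<union> X)"
proof (induction z)
  case Nil
  then show ?case by (simp add: tneg_def fv_def cspan_zero)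
next
  case (Cons x z)
  obtain c d where x: "x = (c, d)" by (cases x)
  have add: "(\<lambda>p. delta (c + - c, d) p - delta (c, d) p - delta (- c, d) p) \<in> cspan (bil2 \<union> X)"
    by (rule cspan_gen) (unfold bil2_def, blast)
  have zero: "(\<lambda>p. delta (0 + 0, d) p - delta (0, d) p - delta (0, d) p) \<in> cspan (bil2 \<union> X)"
    by (rule cspan_gen) (unfold bil2_def, blast)
  from cspan_scale[OF cspan_add[OF add zero], of "-1"]
  have "(\<lambda>p. delta (c, d) p + delta (- c, d) p) \<in> cspan (bil2 \<union> X)"
    by (simp add: add.commute)
  from cspan_add[OF this Cons.IH] show ?case
    by (simp add: x tneg_def fv_Cons algebra_simps)
qed

lemma teq2_iff_append_tneg: "teq2 F z z' \<longleftrightarrow> teq2 F (z @ tneg z') []"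
proof
  assume "teq2 F z z'"
  from cspan_add[OF this[unfolded teq2_def] fv_tneg_in_cspan[of z']]
  show "teq2 F (z @ tneg z') []"
    by (simp add: teq2_def fv_append fv_def algebra_simps)
next
  assume "teq2 F (z @ tneg z') []"
  from cspan_add[OF this[unfolded teq2_def] cspan_scale[OF fv_tneg_in_cspan[of z'], of "-1"]]
  show "teq2 F z z'"
    by (simp add: teq2_def fv_append fv_def algebra_simps)
qed

text \<open>A map on simple tensors that is constant on one class is already zero on the class of
  \<open>[]\<close>, hence descends to the balanced tensor product.\<close>

lemma tsum_teq2:
  fixes \<phi> :: "'a::calg \<Rightarrow> 'a \<Rightarrow> 'b::ab_group_add"
  assumes const: "\<And>w. teq2 F w w0 \<Longrightarrow> tsum \<phi> w = k" and "teq2 F z z'"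
  shows "tsum \<phi> z = tsum \<phi> z'"
proof -
  have null: "tsum \<phi> v = 0" if "teq2 F v []" for v
  proof -
    have "teq2 F (w0 @ v) w0" using teq2_append[OF teq2_refl that, of w0] by simp
    from const[OF this] const[OF teq2_refl] show ?thesis by simp
  qed
  have "\<phi> (- c) d = - \<phi> c d" for c d
    using null[OF teq2_iff_append_tneg[THEN iffD1, OF teq2_refl, of F "[(c, d)]"]]
    by (simp add: tneg_def eq_neg_iff_add_eq_0 add.commute)
  then have "tsum \<phi> (tneg v) = - tsum \<phi> v" for v
    by (induction v) (auto simp: tneg_def)
  with null[OF teq2_iff_append_tneg[THEN iffD1, OF assms(2)]] show ?thesis
    by simp
qed

lemma rt1_append_tneg: "rt1 (u @ tneg v) p = rt1 u p @ tneg (rt1 v p)"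
  by (induction v) (auto simp: rt1_def tneg_def)

lemma rt2_append_tneg: "rt2 (u @ tneg v) p = rt2 u p @ tneg (rt2 v p)"
  by (induction v) (auto simp: rt2_def tneg_def)

section \<open>Conjugating formal tensors\<close>

lemma star_zero: "star_alg st \<Longrightarrow> st 0 = 0"
  unfolding star_alg_def by (metis add_cancel_right_right)

lemma map_prod_star_involution: "star_alg st \<Longrightarrow> map_prod st st (map_prod st st p) = p"
  by (cases p) (simp add: star_alg_def)

lemma star2_eq_map: "star2 st w = map (map_prod st st) w"
  by (simp add: star2_def map_prod_def)

lemma star2_star2 [simp]: "star_alg st \<Longrightarrow> star2 st (star2 st w) = w"
  by (induction w) (auto simp: star2_def star_alg_def)

lemma star2_lt1: "star_alg st \<Longrightarrow> star2 st (lt1 q u) = rt1 (star2 st u) (st q)"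
  by (induction u) (auto simp: star2_def lt1_def rt1_def star_alg_def)

lemma star2_lt2: "star_alg st \<Longrightarrow> star2 st (lt2 q u) = rt2 (star2 st u) (st q)"
  by (induction u) (auto simp: star2_def lt2_def rt2_def star_alg_def)

lemma tsum_star2:
  "star_alg st \<Longrightarrow> tsum (\<lambda>c d. st (\<phi> (st c) (st d))) z = st (tsum \<phi> (star2 st z))"
  by (induction z) (auto simp: star2_def star_zero, simp add: star_alg_def)

lemma delta_involution: "(\<And>x. \<sigma> (\<sigma> x) = x) \<Longrightarrow> delta x (\<sigma> p) = delta (\<sigma> x) p"
  unfolding delta_def by metis

lemma fv_map_involution:
  assumes "\<And>x. \<sigma> (\<sigma> x) = x"
  shows "fv (map \<sigma> w) p = fv w (\<sigma> p)"
proof -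
  have "inj \<sigma>" by (metis assms injI)
  from count_list_map_conv[OF this, of w "\<sigma> p"] show ?thesis
    by (simp add: fv_def assms)
qed

lemma cnj_delta_map_prod_star:
  "star_alg st \<Longrightarrow> cnj (delta x (map_prod st st p)) = delta (map_prod st st x) p"
  using delta_involution[of "map_prod st st", OF map_prod_star_involution] by (simp add: delta_def)

lemma cspan_cnj_reindex:
  assumes "h \<in> cspan G" and "\<And>g. g \<in> G \<Longrightarrow> (\<lambda>p. cnj (g (\<sigma> p))) \<in> cspan G'"
  shows "(\<lambda>p. cnj (h (\<sigma> p))) \<in> cspan G'"
  using assms(1)
proof (induction rule: cspan.induct)
  case cspan_zero
  then show ?case by (simp add: cspan.cspan_zero)
next
  case (cspan_gen g)
  then show ?case by (rule assms(2))
next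
  case (cspan_add f g)
  from cspan.cspan_add[OF cspan_add.IH] show ?case by simp
next
  case (cspan_scale f c)
  from cspan.cspan_scale[OF cspan_scale.IH, of "cnj c"] show ?case by simp
qed

lemma bil2_star_in_cspan:
  fixes st :: "'a::calg \<Rightarrow> 'a"
  assumes st: "star_alg st" and "g \<in> bil2"
  shows "(\<lambda>p. cnj (g (map_prod st st p))) \<in> cspan (bil2 \<union> X)"
proof -
  note simps = cnj_delta_map_prod_star[OF st] st[unfolded star_alg_def]
  from \<open>g \<in> bil2\<close> consider
      a a' b where "g = (\<lambda>p. delta (a + a', b) p - delta (a, b) p - delta (a', b) p)"
    | a b b' where "g = (\<lambda>p. delta (a, b + b') p - delta (a, b) p - delta (a, b') p)"
    | c a b where "g = (\<lambda>p. delta (csc c a, b) p - c * delta (a, b) p)"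
    | c a b where "g = (\<lambda>p. delta (a, csc c b) p - c * delta (a, b) p)"
    unfolding bil2_def by blast
  then have "(\<lambda>p. cnj (g (map_prod st st p))) \<in> bil2"
  proof cases
    case (1 a a' b)
    have "(\<lambda>p. delta (st a + st a', st b) p - delta (st a, st b) p - delta (st a', st b) p) \<in> bil2"
      unfolding bil2_def by blast
    with 1 show ?thesis by (simp add: simps)
  next
    case (2 a b b')
    have "(\<lambda>p. delta (st a, st b + st b') p - delta (st a, st b) p - delta (st a, st b') p) \<in> bil2"
      unfolding bil2_def by blast
    with 2 show ?thesis by (simp add: simps)
  next
    case (3 c a b)
    have "(\<lambda>p. delta (csc (cnj c) (st a), st b) p - cnj c * delta (st a, st b) p) \<in> bil2"
      unfolding bil2_def by blast
    with 3 show ?thesis by (simp add: simps)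
  next
    case (4 c a b)
    have "(\<lambda>p. delta (st a, csc (cnj c) (st b)) p - cnj c * delta (st a, st b) p) \<in> bil2"
      unfolding bil2_def by blast
    with 4 show ?thesis by (simp add: simps)
  qed
  then show ?thesis by (blast intro: cspan_gen)
qed

lemma teq2_star2:
  fixes st :: "'a::calg \<Rightarrow> 'a"
  assumes st: "star_alg st"
    and F': "(\<lambda>(f, g). (st \<circ> f \<circ> st, st \<circ> g \<circ> st)) ` F \<subseteq> F'"
    and "teq2 F w v"
  shows "teq2 F' (star2 st w) (star2 st v)"
proof -
  note inv = map_prod_star_involution[OF st] and delta = cnj_delta_map_prod_star[OF st]
  have gens: "(\<lambda>p. cnj (g (map_prod st st p))) \<in> cspan (bil2 \<union> brel2 F')"
    if "g \<in> bil2 \<union> brel2 F" for g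
    using that
  proof
    assume "g \<in> brel2 F"
    then obtain f h a b where fh: "(f, h) \<in> F"
      and g: "g = (\<lambda>p. delta (f a, b) p - delta (a, h b) p)"
      unfolding brel2_def by blast
    from fh F' have "(st \<circ> f \<circ> st, st \<circ> h \<circ> st) \<in> F'" by blast
    then have "(\<lambda>p. delta ((st \<circ> f \<circ> st) (st a), st b) p - delta (st a, (st \<circ> h \<circ> st) (st b)) p)
        \<in> brel2 F'"
      unfolding brel2_def by blast
    then show ?thesis
      using st by (simp add: g delta star_alg_def cspan_gen)
  qed (rule bil2_star_in_cspan[OF st])
  have "fv (star2 st u) p = cnj (fv u (map_prod st st p))" for u p
    by (simp add: star2_eq_map fv_map_involution[OF inv]) (simp add: fv_def)
  with cspan_cnj_reindex[OF assms(3)[unfolded teq2_def] gens] show ?thesis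
    by (simp add: teq2_def)
qed

section \<open>Multipliers of a non-degenerate algebra\<close>

lemma nondeg_left_zero: "nondeg_idem TYPE('a) \<Longrightarrow> (\<And>b. (a::'a::calg) * b = 0) \<Longrightarrow> a = 0"
  unfolding nondeg_idem_def by blast

lemma nondeg_right_zero: "nondeg_idem TYPE('a) \<Longrightarrow> (\<And>b. b * (a::'a::calg) = 0) \<Longrightarrow> a = 0"
  unfolding nondeg_idem_def by blast

lemma multiplier_ract_mult: "is_multiplier T \<Longrightarrow> ract a T * b = a * lact T b"
  unfolding is_multiplier_def by blast

lemma multiplier_lact_mult: "is_multiplier T \<Longrightarrow> lact T (a * b) = lact T a * b"
  unfolding is_multiplier_def by blast

lemma multiplier_eqI:
  fixes T T' :: "'a::calg mlt"
  assumes "nondeg_idem TYPE('a)" "is_multiplier T" "is_multiplier T'" "\<And>a. lact T a = lact T' a"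
  shows "T = T'"
proof -
  have "ract a T = ract a T'" for a
  proof -
    have "(ract a T - ract a T') * b = 0" for b
      using assms(2-4) by (simp add: algebra_simps multiplier_ract_mult)
    from nondeg_left_zero[OF assms(1) this] show ?thesis by simp
  qed
  with assms(4) show ?thesis
    by (simp add: lact_def ract_def prod_eq_iff fun_eq_iff)
qed

lemma lact_diff:
  fixes T :: "'a::calg mlt"
  assumes "nondeg_idem TYPE('a)" "is_multiplier T"
  shows "lact T (a - b) = lact T a - lact T b"
proof -
  have "c * (lact T (a - b) - (lact T a - lact T b)) = 0" for c
    by (simp add: algebra_simps flip: multiplier_ract_mult[OF assms(2)])
  from nondeg_right_zero[OF assms(1) this] show ?thesis by simp
qed

lemma ract_diff:
  fixes T :: "'a::calg mlt"
  assumes "nondeg_idem TYPE('a)" "is_multiplier T"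
  shows "ract (a - b) T = ract a T - ract b T"
proof -
  have "(ract (a - b) T - (ract a T - ract b T)) * c = 0" for c
    by (simp add: algebra_simps multiplier_ract_mult[OF assms(2)])
  from nondeg_left_zero[OF assms(1) this] show ?thesis by simp
qed

lemma ract_lact_commute:
  fixes T T' :: "'a::calg mlt"
  assumes "nondeg_idem TYPE('a)" "is_multiplier T" "is_multiplier T'"
  shows "ract (lact T m) T' = lact T (ract m T')"
proof -
  have "(ract (lact T m) T' - lact T (ract m T')) * b = 0" for b
    by (simp add: algebra_simps multiplier_ract_mult[OF assms(3)]
        multiplier_lact_mult[OF assms(2), symmetric])
  from nondeg_left_zero[OF assms(1) this] show ?thesis by simp
qed

lemma aspan_mult_eq_zero:
  "e \<in> aspan G \<Longrightarrow> (\<And>g. g \<in> G \<Longrightarrow> g * E = 0) \<Longrightarrow> e * (E::'a::calg) = 0"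
proof (induction rule: aspan.induct)
  case (aspan_scale f c)
  then show ?case using csc_mult_l[of c f E] csc_add_r[of c 0 0] by simp
qed (auto simp: algebra_simps)

lemma mult_aspan_eq_zero:
  "e \<in> aspan G \<Longrightarrow> (\<And>g. g \<in> G \<Longrightarrow> E * g = 0) \<Longrightarrow> (E::'a::calg) * e = 0"
proof (induction rule: aspan.induct)
  case (aspan_scale f c)
  then show ?case using csc_mult_r[of E c f] csc_add_r[of c 0 0] by simp
qed (auto simp: algebra_simps)

lemma lact_mstar: "lact (mstar st T) a = st (ract (st a) T)"
  by (simp add: lact_def ract_def mstar_def)

lemma ract_mstar: "ract a (mstar st T) = st (lact T (st a))"
  by (simp add: lact_def ract_def mstar_def)

lemma mstar_mstar [simp]: "star_alg st \<Longrightarrow> mstar st (mstar st T) = T"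
  by (simp add: mstar_def lact_def ract_def star_alg_def)

section \<open>Multiplier Hopf \<open>*\<close>-algebroids\<close>

locale hopf_star_algebroid_data =
  fixes st :: "'a::calg \<Rightarrow> 'a"
    and B C :: "'a mlt set"
    and SB SC :: "'a mlt \<Rightarrow> 'a mlt"
    and Db Dc :: "'a cop"
    and eB eC :: "'a \<Rightarrow> 'a mlt"
    and S :: "'a \<Rightarrow> 'a"
  assumes hopf_star: "mult_hopf_star_algebroid st B C SB SC Db Dc"
    and counit_B: "left_counit B SB Db eB"
    and counit_C: "right_counit C SC Dc eC"
    and antipode_S: "antipode B C SB SC Db Dc eB eC S"
begin

abbreviation "FB \<equiv> fBB B SB"
abbreviation "FC \<equiv> fCC C SC"

lemma
  shows nondeg: "nondeg_idem TYPE('a)"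
    and subalg_B: "subalg B"
    and subalg_C: "subalg C"
    and anti_iso_SB: "anti_iso B C SB"
    and anti_iso_SC: "anti_iso C B SC"
    and aspan_SB_A: "\<forall>a. a \<in> aspan {lact (SB x) b | x b. x \<in> B}"
    and aspan_A_C: "\<forall>a. a \<in> aspan {ract b y | y b. y \<in> C}"
    and aspan_A_SC: "\<forall>a. a \<in> aspan {ract b (SC y) | y b. y \<in> C}"
    and nondeg_rt1: "\<forall>w. (\<forall>a. teq2 FB (rt1 w a) []) \<longrightarrow> teq2 FB w []"
    and nondeg_rt2: "\<forall>w. (\<forall>b. teq2 FB (rt2 w b) []) \<longrightarrow> teq2 FB w []"
    and Db_rt2: "\<forall>c a. \<exists>u. \<forall>b. teq2 FB (Db c [(a, b)]) (rt2 u b)"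
    and Db_rt1: "\<forall>c b. \<exists>u. \<forall>a. teq2 FB (Db c [(a, b)]) (rt1 u a)"
    and Dc_lt2: "\<forall>c a. \<exists>u. \<forall>b. teq2 FC (Dc c [(a, b)]) (lt2 b u)"
    and Dc_lt1: "\<forall>c b. \<exists>u. \<forall>a. teq2 FC (Dc c [(a, b)]) (lt1 a u)"
  using hopf_star
  unfolding mult_hopf_star_algebroid_def regular_mult_hopf_algebroid_def mult_bialgebroid_def Let_def
  by - (elim conjE, assumption)+

lemma
  shows Tlam_surj: "\<exists>w. teq2 FB (Tlam B SB Db w) u"
    and Trho_surj: "\<exists>w. teq2 FB (Trho B SB Db w) u"
  using hopf_star unfolding mult_hopf_star_algebroid_def regular_mult_hopf_algebroid_def qbij_def
  by blast+

lemma
  shows star: "star_alg st"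
    and mstar_B: "x \<in> B \<Longrightarrow> mstar st x \<in> B"
    and mstar_C: "y \<in> C \<Longrightarrow> mstar st y \<in> C"
    and SB_mstar_SC_mstar: "y \<in> C \<Longrightarrow> SB (mstar st (SC (mstar st y))) = y"
    and SC_mstar_SB_mstar: "x \<in> B \<Longrightarrow> SC (mstar st (SB (mstar st x))) = x"
    and Db_star: "teq2 FB (Db (st a) w) (star2 st (Dc a (star2 st w)))"
  using hopf_star unfolding mult_hopf_star_algebroid_def by blast+

lemma
  shows eB_in_B: "eB a \<in> B"
    and left_counit_rB: "teq2 FB w (rB B SB Db a b) \<Longrightarrow> tsum (\<lambda>c d. lact (SB (eB c)) d) w = a * b"
  using counit_B unfolding left_counit_def tsum_def by blast+

lemma
  shows eC_in_C: "eC a \<in> C"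
    and right_counit_rC: "teq2 FC w (rC C SC Dc a b) \<Longrightarrow> tsum (\<lambda>c d. ract d (eC c)) w = b * a"
  using counit_C unfolding right_counit_def tsum_def by blast+

lemma
  shows S_bij: "bij S"
    and S_add: "S (a + b) = S a + S b"
    and S_mult: "S (a * b) = S b * S a"
    and S_module: "\<lbrakk>x \<in> B; x' \<in> B; y \<in> C; y' \<in> C\<rbrakk> \<Longrightarrow>
       S (ract (ract (lact x (lact y a)) x') y') =
       lact (SC y') (lact (SB x') (ract (ract (S a) (SC y)) (SB x)))"
    and antipode_rB: "teq2 FB w (rB B SB Db a b) \<Longrightarrow> tsum (\<lambda>c d. S c * d) w = lact (SC (eC a)) b"
    and antipode_lC: "teq2 FC w (lC C SC Dc b a) \<Longrightarrow> tsum (\<lambda>c d. c * S d) w = ract a (SB (eB b))"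
  using antipode_S unfolding antipode_def tsum_def by blast+

lemma star_star [simp]: "st (st a) = a"
  using star unfolding star_alg_def by blast

lemmas left_zero = nondeg_left_zero[OF nondeg]
  and right_zero = nondeg_right_zero[OF nondeg]

lemma multiplier_B: "x \<in> B \<Longrightarrow> is_multiplier x"
  using subalg_B unfolding subalg_def by blast

lemma multiplier_C: "y \<in> C \<Longrightarrow> is_multiplier y"
  using subalg_C unfolding subalg_def by blast

lemma SB_in_C: "x \<in> B \<Longrightarrow> SB x \<in> C"
  using anti_iso_SB unfolding anti_iso_def bij_betw_def by blast

lemma SC_in_B: "y \<in> C \<Longrightarrow> SC y \<in> B"
  using anti_iso_SC unfolding anti_iso_def bij_betw_def by blast

lemma C_eq_SB_image: "y \<in> C \<Longrightarrow> \<exists>x\<in>B. y = SB x"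
  using anti_iso_SB unfolding anti_iso_def bij_betw_def by blast

lemma Db_lB: "teq2 FB (Db b [(a, d)]) (rt2 (lB B SB Db b a) d)"
  unfolding lB_def using someI_ex[OF Db_rt2[rule_format, of b a]] by blast

lemma Db_rB: "teq2 FB (Db b [(a, c)]) (rt1 (rB B SB Db b c) a)"
  unfolding rB_def using someI_ex[OF Db_rt1[rule_format, of b c]] by blast

lemma Dc_lC: "teq2 FC (Dc b [(a, d)]) (lt2 d (lC C SC Dc b a))"
  unfolding lC_def using someI_ex[OF Dc_lt2[rule_format, of b a]] by blast

lemma Dc_rC: "teq2 FC (Dc b [(a, c)]) (lt1 a (rC C SC Dc b c))"
  unfolding rC_def using someI_ex[OF Dc_lt1[rule_format, of b c]] by blast

lemma teq2_FB_star2: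
  assumes "teq2 FB w v"
  shows "teq2 FC (star2 st w) (star2 st v)"
proof (rule teq2_star2[OF star _ assms])
  show "(\<lambda>(f, g). (st \<circ> f \<circ> st, st \<circ> g \<circ> st)) ` FB \<subseteq> FC"
  proof (rule subsetI)
    fix p assume "p \<in> (\<lambda>(f, g). (st \<circ> f \<circ> st, st \<circ> g \<circ> st)) ` FB"
    then obtain x where x: "x \<in> B" and p: "p = (st \<circ> lact x \<circ> st, st \<circ> lact (SB x) \<circ> st)"
      unfolding fBB_def by auto
    define y where "y = mstar st (SB x)"
    have y: "y \<in> C" unfolding y_def by (rule mstar_C[OF SB_in_C[OF x]])
    have "SC y = mstar st x"
      using SC_mstar_SB_mstar[OF mstar_B[OF x]] by (simp add: y_def star)
    then have "p = ((\<lambda>a. ract a (SC y)), (\<lambda>b. ract b y))"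
      by (simp add: p y_def ract_mstar fun_eq_iff)
    with y show "p \<in> FC"
      unfolding fCC_def by blast
  qed
qed

lemma teq2_FC_star2:
  assumes "teq2 FC w v"
  shows "teq2 FB (star2 st w) (star2 st v)"
proof (rule teq2_star2[OF star _ assms])
  show "(\<lambda>(f, g). (st \<circ> f \<circ> st, st \<circ> g \<circ> st)) ` FC \<subseteq> FB"
  proof (rule subsetI)
    fix p assume "p \<in> (\<lambda>(f, g). (st \<circ> f \<circ> st, st \<circ> g \<circ> st)) ` FC"
    then obtain y where y: "y \<in> C"
      and p: "p = (st \<circ> (\<lambda>a. ract a (SC y)) \<circ> st, st \<circ> (\<lambda>b. ract b y) \<circ> st)"
      unfolding fCC_def by auto
    define x where "x = mstar st (SC y)"
    have x: "x \<in> B" unfolding x_def by (rule mstar_B[OF SC_in_B[OF y]])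
    have "SB x = mstar st y"
      using SB_mstar_SC_mstar[OF mstar_C[OF y]] by (simp add: x_def star)
    then have "p = (lact x, lact (SB x))"
      by (simp add: p x_def lact_mstar fun_eq_iff)
    with x show "p \<in> FB"
      unfolding fBB_def by blast
  qed
qed

lemma teq2_rt1_cancel:
  assumes "\<And>p. teq2 FB (rt1 u p) (rt1 v p)"
  shows "teq2 FB u v"
proof -
  have "teq2 FB (rt1 (u @ tneg v) p) []" for p
    unfolding rt1_append_tneg by (rule teq2_iff_append_tneg[THEN iffD1, OF assms])
  with nondeg_rt1 have "teq2 FB (u @ tneg v) []" by blast
  then show ?thesis by (rule teq2_iff_append_tneg[THEN iffD2])
qed

lemma teq2_rt2_cancel:
  assumes "\<And>p. teq2 FB (rt2 u p) (rt2 v p)"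
  shows "teq2 FB u v"
proof -
  have "teq2 FB (rt2 (u @ tneg v) p) []" for p
    unfolding rt2_append_tneg by (rule teq2_iff_append_tneg[THEN iffD1, OF assms])
  with nondeg_rt2 have "teq2 FB (u @ tneg v) []" by blast
  then show ?thesis by (rule teq2_iff_append_tneg[THEN iffD2])
qed

lemma rB_teq2_star2_rC: "teq2 FB (rB B SB Db a b) (star2 st (rC C SC Dc (st a) (st b)))"
proof (rule teq2_rt1_cancel)
  fix p
  have "teq2 FB (rt1 (rB B SB Db a b) p) (Db a [(p, b)])"
    by (rule teq2_sym[OF Db_rB])
  also have "teq2 FB (Db a [(p, b)]) (star2 st (Dc (st a) [(st p, st b)]))"
    using Db_star[of "st a" "[(p, b)]"] by (simp add: star2_def)
  also have "teq2 FB (star2 st (Dc (st a) [(st p, st b)])) (rt1 (star2 st (rC C SC Dc (st a) (st b))) p)"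
    using teq2_FC_star2[OF Dc_rC[of "st a" "st p" "st b"]] by (simp add: star2_lt1[OF star])
  finally show "teq2 FB (rt1 (rB B SB Db a b) p) (rt1 (star2 st (rC C SC Dc (st a) (st b))) p)" .
qed

lemma lB_teq2_star2_lC: "teq2 FB (lB B SB Db b a) (star2 st (lC C SC Dc (st b) (st a)))"
proof (rule teq2_rt2_cancel)
  fix e
  have "teq2 FB (rt2 (lB B SB Db b a) e) (Db b [(a, e)])"
    by (rule teq2_sym[OF Db_lB])
  also have "teq2 FB (Db b [(a, e)]) (star2 st (Dc (st b) [(st a, st e)]))"
    using Db_star[of "st b" "[(a, e)]"] by (simp add: star2_def)
  also have "teq2 FB (star2 st (Dc (st b) [(st a, st e)])) (rt2 (star2 st (lC C SC Dc (st b) (st a))) e)"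
    using teq2_FC_star2[OF Dc_lC[of "st b" "st a" "st e"]] by (simp add: star2_lt2[OF star])
  finally show "teq2 FB (rt2 (lB B SB Db b a) e) (rt2 (star2 st (lC C SC Dc (st b) (st a))) e)" .
qed

subsection \<open>The counits\<close>

lemma lact_SB_eB: "lact (SB (eB p)) q = lact (mstar st (eC (st p))) q"
proof -
  let ?\<epsilon>B = "\<lambda>c d. lact (SB (eB c)) d" and ?\<epsilon>C = "\<lambda>c d. lact (mstar st (eC (st c))) d"
  have \<epsilon>C_star: "tsum ?\<epsilon>C z = st (tsum (\<lambda>c d. ract d (eC c)) (star2 st z))" for z
    using tsum_star2[OF star, of "\<lambda>c d. ract d (eC c)" z] by (simp add: lact_mstar)
  have \<epsilon>C_teq2: "tsum ?\<epsilon>C z = tsum ?\<epsilon>C z'" if "teq2 FB z z'" for z z'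
    unfolding \<epsilon>C_star by (rule arg_cong[OF tsum_teq2[OF right_counit_rC teq2_FB_star2[OF that]]])
  have on_rB: "tsum ?\<epsilon>B (rB B SB Db a b) = tsum ?\<epsilon>C (rB B SB Db a b)" for a b
  proof -
    have "tsum ?\<epsilon>C (rB B SB Db a b) = tsum ?\<epsilon>C (star2 st (rC C SC Dc (st a) (st b)))"
      by (rule \<epsilon>C_teq2[OF rB_teq2_star2_rC])
    also have "\<dots> = st (st b * st a)"
      by (simp add: \<epsilon>C_star star2_star2[OF star] right_counit_rC[OF teq2_refl])
    also have "\<dots> = a * b"
      using star unfolding star_alg_def by simp
    finally show ?thesis
      by (simp add: left_counit_rB[OF teq2_refl])
  qed
  obtain w where w: "teq2 FB (Trho B SB Db w) [(p, q)]"
    using Trho_surj by blast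
  have "lact (SB (eB p)) q = tsum ?\<epsilon>B (Trho B SB Db w)"
    using tsum_teq2[OF left_counit_rB w] by simp
  also have "\<dots> = tsum ?\<epsilon>C (Trho B SB Db w)"
    unfolding tsum_Trho on_rB ..
  also have "\<dots> = lact (mstar st (eC (st p))) q"
    using \<epsilon>C_teq2[OF w] by simp
  finally show ?thesis .
qed

lemma eC_star: "eC (st a) = mstar st (SB (eB a))"
proof -
  have "SB (eB a) = mstar st (eC (st a))"
    using multiplier_eqI[OF nondeg multiplier_C[OF SB_in_C[OF eB_in_B]]
        multiplier_C[OF mstar_C[OF eC_in_C]] lact_SB_eB] .
  then show ?thesis by (simp add: star)
qed

lemma eB_star: "eB (st a) = mstar st (SC (eC a))"
proof -
  have "SC (eC a) = SC (mstar st (SB (mstar st (mstar st (eB (st a))))))"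
    using eC_star[of "st a"] by (simp add: star)
  also have "\<dots> = mstar st (eB (st a))"
    by (rule SC_mstar_SB_mstar[OF mstar_B[OF eB_in_B]])
  finally show ?thesis by (simp add: star)
qed

subsection \<open>The antipode\<close>

lemma S_zero: "S 0 = 0"
  using S_add[of 0 0] by simp

lemma tsum_S_mult_teq2: "teq2 FB z z' \<Longrightarrow> tsum (\<lambda>c d. S c * d) z = tsum (\<lambda>c d. S c * d) z'"
  by (rule tsum_teq2[OF antipode_rB])

lemma tsum_mult_S_teq2: "teq2 FC z z' \<Longrightarrow> tsum (\<lambda>c d. c * S d) z = tsum (\<lambda>c d. c * S d) z'"
  by (rule tsum_teq2[OF antipode_lC])

lemma S_lact_B:
  assumes x: "x \<in> B"
  shows "S (lact x a) = ract (S a) (SB x)"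
proof -
  have bal: "(lact x, lact (SB x)) \<in> FB"
    unfolding fBB_def using x by blast
  have "S (lact x a) * b = S a * lact (SB x) b" for b
    using tsum_S_mult_teq2[OF teq2_balanced[OF bal, of a b]] by simp
  then have "(S (lact x a) - ract (S a) (SB x)) * b = 0" for b
    by (simp add: algebra_simps multiplier_ract_mult[OF multiplier_C[OF SB_in_C[OF x]]])
  from left_zero[OF this] show ?thesis by simp
qed

lemma S_ract_C:
  assumes y: "y \<in> C"
  shows "S (ract b y) = lact (SC y) (S b)"
proof -
  have bal: "((\<lambda>a. ract a (SC y)), (\<lambda>b. ract b y)) \<in> FC"
    unfolding fCC_def using y by blast
  have "ract a (SC y) * S b = a * S (ract b y)" for a
    using tsum_mult_S_teq2[OF teq2_balanced[OF bal, of a b]] by simp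
  then have "a * (S (ract b y) - lact (SC y) (S b)) = 0" for a
    by (simp add: algebra_simps multiplier_ract_mult[OF multiplier_B[OF SC_in_B[OF y]]])
  from right_zero[OF this] show ?thesis by simp
qed

lemma eq_zero_if_lact_SC:
  assumes "\<And>y. y \<in> C \<Longrightarrow> lact (SC y) E = 0"
  shows "E = 0"
proof (rule right_zero)
  fix e
  show "e * E = 0"
    by (rule aspan_mult_eq_zero[OF aspan_A_SC[rule_format]])
      (auto simp: multiplier_ract_mult[OF multiplier_B[OF SC_in_B]] assms)
qed

lemma eq_zero_if_ract_SB:
  assumes "\<And>x. x \<in> B \<Longrightarrow> ract E (SB x) = 0"
  shows "E = 0"
proof (rule left_zero)
  fix e
  show "E * e = 0"
    by (rule mult_aspan_eq_zero[OF aspan_SB_A[rule_format]])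
      (auto simp: multiplier_ract_mult[OF multiplier_C[OF SB_in_C], symmetric] assms)
qed

lemma S_ract_lact:
  assumes x': "x' \<in> B" and y: "y \<in> C"
  shows "S (ract (lact y a) x') = lact (SB x') (ract (S a) (SC y))"
proof -
  define M where "M = S (ract (lact y a) x')"
  define N where "N = lact (SB x') (ract (S a) (SC y))"
  have "M - N = 0"
  proof (rule eq_zero_if_ract_SB)
    fix x assume x: "x \<in> B"
    show "ract (M - N) (SB x) = 0"
    proof (rule eq_zero_if_lact_SC)
      fix y' assume y': "y' \<in> C"
      note commute = ract_lact_commute[OF nondeg]
      have msb: "is_multiplier (SB x)" by (rule multiplier_C[OF SB_in_C[OF x]])
      have "ract (ract (lact x (lact y a)) x') y' = lact x (ract (ract (lact y a) x') y')"
        by (simp add: commute multiplier_B[OF x] multiplier_B[OF x'] multiplier_C[OF y'])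
      then have "lact (SC y') (ract M (SB x)) = S (ract (ract (lact x (lact y a)) x') y')"
        by (simp add: S_lact_B[OF x] S_ract_C[OF y'] M_def commute msb multiplier_B[OF SC_in_B[OF y']])
      also have "\<dots> = lact (SC y') (ract N (SB x))"
        by (simp add: S_module[OF x x' y y'] N_def commute msb multiplier_C[OF SB_in_C[OF x']])
      finally show "lact (SC y') (ract (M - N) (SB x)) = 0"
        by (simp add: ract_diff[OF nondeg msb] lact_diff[OF nondeg multiplier_B[OF SC_in_B[OF y']]])
    qed
  qed
  then show ?thesis by (simp add: M_def N_def)
qed

lemma S_lact_C:
  assumes y: "y \<in> C"
  shows "S (lact y a) = ract (S a) (SC y)"
proof -
  define D where "D = S (lact y a) - ract (S a) (SC y)"
  have lact_D: "lact y' D = 0" if y': "y' \<in> C" for y'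
  proof (rule right_zero)
    fix e
    obtain x' where x': "x' \<in> B" and y'_eq: "y' = SB x'"
      using C_eq_SB_image[OF y'] by blast
    have msb': "is_multiplier (SB x')" by (rule multiplier_C[OF SB_in_C[OF x']])
    obtain e' where e': "e = S e'"
      using S_bij unfolding bij_def surj_def by blast
    have "S e' * lact (SB x') (S (lact y a)) = S (lact y a * lact x' e')"
      by (simp add: S_mult S_lact_B[OF x'] multiplier_ract_mult[OF msb'])
    also have "\<dots> = S e' * lact (SB x') (ract (S a) (SC y))"
      by (simp add: S_mult S_ract_lact[OF x' y] multiplier_ract_mult[OF multiplier_B[OF x'], symmetric])
    finally show "e * lact y' D = 0"
      by (simp add: e' y'_eq D_def lact_diff[OF nondeg msb'] algebra_simps)
  qed
  have "e * D = 0" for e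
    by (rule aspan_mult_eq_zero[OF aspan_A_C[rule_format]])
      (auto simp: multiplier_ract_mult[OF multiplier_C] lact_D)
  then have "D = 0" by (rule right_zero)
  then show ?thesis by (simp add: D_def)
qed

text \<open>The map \<open>c \<otimes> d \<mapsto> S(d\<^sup>*)\<^sup>* c\<close> is well defined on \<open>\<^sub>BA \<otimes> A\<^sup>B\<close>: it is the
  conjugate of \<open>m(\<iota> \<otimes> S)\<close> on \<open>\<^sup>CA \<otimes> A\<^sub>C\<close>.\<close>

lemma tsum_star_S_star:
  "tsum (\<lambda>c d. st (S (st d)) * c) z = st (tsum (\<lambda>c d. c * S d) (star2 st z))"
  using tsum_star2[OF star, of "\<lambda>c d. c * S d" z] star by (simp add: star_alg_def)

lemma tsum_star_S_star_lB: "tsum (\<lambda>c d. st (S (st d)) * c) (lB B SB Db b a) = lact (eC b) a"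
proof -
  have "tsum (\<lambda>c d. st (S (st d)) * c) (lB B SB Db b a)
      = st (tsum (\<lambda>c d. c * S d) (star2 st (star2 st (lC C SC Dc (st b) (st a)))))"
    unfolding tsum_star_S_star by (rule arg_cong[OF tsum_mult_S_teq2[OF teq2_FB_star2[OF lB_teq2_star2_lC]]])
  also have "\<dots> = st (ract (st a) (SB (eB (st b))))"
    by (simp add: star2_star2[OF star] antipode_lC[OF teq2_refl])
  also have "\<dots> = lact (eC b) a"
    using eC_star[of "st b"] by (simp add: lact_mstar)
  finally show ?thesis .
qed

lemma tsum_S_mult_lB: "tsum (\<lambda>c d. S c * d) (lB B SB Db b a) = ract (S a) (SC (eC b))"
proof -
  have msc: "is_multiplier (SC (eC b))" by (rule multiplier_B[OF SC_in_B[OF eC_in_C]])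
  have rt1: "tsum (\<lambda>c d. S c * d) (rt1 u a) = S a * tsum (\<lambda>c d. S c * d) u" for u
    by (induction u) (auto simp: rt1_def S_mult algebra_simps)
  have rt2: "tsum (\<lambda>c d. S c * d) (rt2 u e) = tsum (\<lambda>c d. S c * d) u * e" for u e
    by (induction u) (auto simp: rt2_def algebra_simps)
  have "tsum (\<lambda>c d. S c * d) (lB B SB Db b a) * e = ract (S a) (SC (eC b)) * e" for e
  proof -
    have "tsum (\<lambda>c d. S c * d) (lB B SB Db b a) * e = tsum (\<lambda>c d. S c * d) (Db b [(a, e)])"
      using tsum_S_mult_teq2[OF Db_lB] by (simp add: rt2)
    also have "\<dots> = S a * lact (SC (eC b)) e"
      using tsum_S_mult_teq2[OF Db_rB] by (simp add: rt1 antipode_rB[OF teq2_refl])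
    finally show ?thesis
      by (simp add: multiplier_ract_mult[OF msc])
  qed
  then have "(tsum (\<lambda>c d. S c * d) (lB B SB Db b a) - ract (S a) (SC (eC b))) * e = 0" for e
    by (simp add: algebra_simps)
  from left_zero[OF this] show ?thesis by simp
qed

text \<open>Both \<open>c \<otimes> d \<mapsto> S(S(d\<^sup>*)\<^sup>* c)\<close> and \<open>m(S \<otimes> \<iota>)\<close> send \<open>\<Delta>\<^sub>B(b)(a \<otimes> 1)\<close> to
  \<open>S(\<epsilon>\<^sub>C(b) a)\<close>; as \<open>T\<^sub>\<lambda>\<close> is surjective they agree, i.e. \<open>S(p) S(S(q\<^sup>*)\<^sup>*) = S(p) q\<close>.\<close>

lemma S_star_S_star: "S (st (S (st q))) = q"
proof -
  let ?\<phi> = "\<lambda>c d. S (st (S (st d)) * c) - S c * d"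
  have tsum_\<phi>: "tsum ?\<phi> z = S (tsum (\<lambda>c d. st (S (st d)) * c) z) - tsum (\<lambda>c d. S c * d) z" for z
    by (induction z) (auto simp: S_add S_zero algebra_simps)
  have \<phi>_teq2: "tsum ?\<phi> z = tsum ?\<phi> z'" if "teq2 FB z z'" for z z'
    unfolding tsum_\<phi> tsum_star_S_star
    using tsum_mult_S_teq2[OF teq2_FB_star2[OF that]] tsum_S_mult_teq2[OF that] by simp
  have \<phi>_lB: "tsum ?\<phi> (lB B SB Db b a) = 0" for a b
    unfolding tsum_\<phi> tsum_star_S_star_lB tsum_S_mult_lB by (simp add: S_lact_C[OF eC_in_C])
  have "S p * (S (st (S (st q))) - q) = 0" for p
  proof -
    obtain w where w: "teq2 FB (Tlam B SB Db w) [(p, q)]"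
      using Tlam_surj by blast
    have "?\<phi> p q = tsum ?\<phi> (Tlam B SB Db w)"
      using \<phi>_teq2[OF w] by simp
    also have "\<dots> = 0"
      unfolding tsum_Tlam \<phi>_lB by (induction w) auto
    finally show ?thesis
      by (simp add: S_mult algebra_simps)
  qed
  then have "e * (S (st (S (st q))) - q) = 0" for e
    using S_bij unfolding bij_def surj_def by metis
  from right_zero[OF this] show ?thesis by simp
qed

end

theorem proposition6p2:
  fixes st :: "'a::calg \<Rightarrow> 'a"
    and B C :: "'a mlt set"
    and SB SC :: "'a mlt \<Rightarrow> 'a mlt"
    and Db Dc :: "'a cop"
    and eB eC :: "'a \<Rightarrow> 'a mlt"
    and S :: "'a \<Rightarrow> 'a"
  assumes "mult_hopf_star_algebroid st B C SB SC Db Dc"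
    and "left_counit B SB Db eB"
    and "right_counit C SC Dc eC"
    and "antipode B C SB SC Db Dc eB eC S"
  shows "(\<forall>a. eC (st a) = mstar st (SB (eB a))) \<and>
         (\<forall>a. eB (st a) = mstar st (SC (eC a))) \<and>
         (\<forall>a. S (st (S (st a))) = a)"
proof -
  interpret hopf_star_algebroid_data st B C SB SC Db Dc eB eC S
    using assms by unfold_locales
  show ?thesis using eC_star eB_star S_star_S_star by blast
qed

end
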